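(* Let $\mathcal{M}=((X,\mathcal{C}),\mathcal{V})$ be a closure model. Then the relation $\equiv_{IML}$ is a closure bisimulation relation.
   Context: A closure space is $(X,\mathcal{C})$ with $X$ non-empty, $\mathcal{C}(\emptyset)=\emptyset$, $A\subseteq\mathcal{C}(A)$, $\mathcal{C}(A_1\cup A_2)=\mathcal{C}(A_1)\cup\mathcal{C}(A_2)$; interior $\mathcal{I}(A)=X\setminus\mathcal{C}(X\setminus A)$. A closure model adds $\mathcal{V}:AP\to\mathcal{P}(X)$; $\mathcal{V}^{-1}(x)=\{p\in AP\mid x\in\mathcal{V}(p)\}$. IML formulas: $\Phi::=p\mid\neg\Phi\mid\bigwedge_{i\in I}\Phi_i\mid\mathcal{N}\Phi$ ($I$ any set); $x\models p$ iff $x\in\mathcal{V}(p)$, negation and conjunction standard, $x\models\mathcal{N}\Phi$ iff $x\in\mathcal{C}(\{y\mid y\models\Phi\})$. $x_1\equiv_{IML}x_2$ iff they satisfy the same IML formulas. Closure bisimulation: a non-empty equivalence relation $B$ on $X$ such that whenever $(x_1,x_2)\in B$: (1) $\mathcal{V}^{-1}(x_1)=\mathcal{V}^{-1}(x_2)$; (2) for every $X_1\subseteq X$ with $x_1\in\mathcal{I}(X_1)$ there is $X_2\subseteq X$ with $x_2\in\mathcal{I}(X_2)$ such that for every $x_2'\in X_2$ there exists $x_1'\in X_1$ with $(x_1',x_2')\in B$. *)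

theory Defs
  imports Main
begin

text \<open>Closure spaces. The carrier X is the whole (nonempty) type 'x.\<close>
definition closure_space :: "('x set \<Rightarrow> 'x set) \<Rightarrow> bool" where
  "closure_space C \<longleftrightarrow>
     C {} = {} \<and>
     (\<forall>A. A \<subseteq> C A) \<and>
     (\<forall>A1 A2. C (A1 \<union> A2) = C A1 \<union> C A2)"

definition interior_op :: "('x set \<Rightarrow> 'x set) \<Rightarrow> 'x set \<Rightarrow> 'x set" where
  "interior_op C A = - C (- A)"

definition val_inv :: "('ap \<Rightarrow> 'x set) \<Rightarrow> 'x \<Rightarrow> 'ap set" where
  "val_inv V x = {p. x \<in> V p}"

datatype ('ap, 'i) iml =
    Atom 'ap
  | Neg "('ap, 'i) iml"
  | Conj "'i set" "'i \<Rightarrow> ('ap, 'i) iml"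
  | Near "('ap, 'i) iml"

primrec iml_ext :: "('x set \<Rightarrow> 'x set) \<Rightarrow> ('ap \<Rightarrow> 'x set) \<Rightarrow> ('ap, 'i) iml \<Rightarrow> 'x set" where
  "iml_ext C V (Atom p) = V p"
| "iml_ext C V (Neg \<phi>) = - iml_ext C V \<phi>"
| "iml_ext C V (Conj I f) = {x. \<forall>i\<in>I. x \<in> iml_ext C V (f i)}"
| "iml_ext C V (Near \<phi>) = C (iml_ext C V \<phi>)"

definition iml_sat :: "('x set \<Rightarrow> 'x set) \<Rightarrow> ('ap \<Rightarrow> 'x set) \<Rightarrow> 'x \<Rightarrow> ('ap, 'i) iml \<Rightarrow> bool" where
  "iml_sat C V x \<phi> \<longleftrightarrow> x \<in> iml_ext C V \<phi>"

text \<open>Logical equivalence; conjunctions are indexed by 'x set, which suffices for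
  arbitrary index sets (any conjunction is semantically a conjunction over at most
  |P(X)| distinct conjuncts).\<close>
definition iml_equiv :: "('x set \<Rightarrow> 'x set) \<Rightarrow> ('ap \<Rightarrow> 'x set) \<Rightarrow> ('x \<times> 'x) set" where
  "iml_equiv C V =
     {(x1, x2). \<forall>\<phi> :: ('ap, 'x set) iml. iml_sat C V x1 \<phi> \<longleftrightarrow> iml_sat C V x2 \<phi>}"

definition closure_bisim :: "('x set \<Rightarrow> 'x set) \<Rightarrow> ('ap \<Rightarrow> 'x set) \<Rightarrow> ('x \<times> 'x) set \<Rightarrow> bool" where
  "closure_bisim C V B \<longleftrightarrow>
     B \<noteq> {} \<and> equiv UNIV B \<and>
     (\<forall>(x1, x2)\<in>B.
        val_inv V x1 = val_inv V x2 \<and>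
        (\<forall>X1. x1 \<in> interior_op C X1 \<longrightarrow>
           (\<exists>X2. x2 \<in> interior_op C X2 \<and>
                 (\<forall>x2'\<in>X2. \<exists>x1'\<in>X1. (x1', x2') \<in> B))))"

end

theory Submission
  imports Defs
begin

text \<open>Two points that are not equivalent are separated by a formula, and a conjunction
  over all these separating formulas defines the equivalence class of a point; disjunctions
  of class formulas then define every \<open>\<equiv>\<close>-saturated set. Condition (2) follows by taking
  \<open>X\<^sub>2\<close> to be the saturation of \<open>X\<^sub>1\<close>: its complement is defined by some \<open>\<Phi>\<close>, and
  \<open>x\<^sub>1 \<notin> \<C>(-X\<^sub>1) \<supseteq> \<C>(-X\<^sub>2)\<close> means \<open>x\<^sub>1 \<Turnstile> \<not>\<N>\<Phi>\<close>, hence \<open>x\<^sub>2 \<Turnstile> \<not>\<N>\<Phi>\<close>, i.e. \<open>x\<^sub>2 \<in> \<I>(X\<^sub>2)\<close>.\<close>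

lemma closure_space_mono:
  assumes "closure_space C" and "A \<subseteq> B"
  shows "C A \<subseteq> C B"
proof -
  have "C B = C A \<union> C B"
    using assms unfolding closure_space_def by (metis sup.absorb2)
  then show ?thesis by blast
qed

lemma interior_op_mono:
  assumes "closure_space C" and "A \<subseteq> B"
  shows "interior_op C A \<subseteq> interior_op C B"
  using closure_space_mono[OF assms(1), of "- B" "- A"] assms(2)
  unfolding interior_op_def by blast

lemma iml_equiv_iff:
  "(a, b) \<in> iml_equiv C V \<longleftrightarrow>
     (\<forall>\<phi> :: ('ap, 'x set) iml. a \<in> iml_ext C V \<phi> \<longleftrightarrow> b \<in> iml_ext C V \<phi>)"
  for C :: "'x set \<Rightarrow> 'x set" and V :: "'ap \<Rightarrow> 'x set"
  by (simp add: iml_equiv_def iml_sat_def)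

lemma iml_equiv_refl: "(x, x) \<in> iml_equiv C V"
  by (simp add: iml_equiv_iff)

lemma equiv_iml_equiv: "equiv UNIV (iml_equiv C V)"
  by (auto simp: equiv_def refl_on_def sym_def trans_def iml_equiv_iff)

lemma equiv_Image_complement_saturated:
  assumes "equiv UNIV r"
  shows "r `` (- r `` A) \<subseteq> - r `` A"
proof
  fix b assume "b \<in> r `` (- r `` A)"
  then obtain a where a: "a \<notin> r `` A" "(a, b) \<in> r" by blast
  show "b \<in> - r `` A"
  proof
    assume "b \<in> r `` A"
    then obtain x where "x \<in> A" "(x, b) \<in> r" by blast
    with a(2) have "(x, a) \<in> r"
      using assms by (meson equivE symD transD)
    with \<open>x \<in> A\<close> a(1) show False by blast
  qed
qed

text \<open>Conjunctions and disjunctions over a set of points, indexed by the singletons of the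
  points so that they fit the index type \<open>'x set\<close>.\<close>

definition conj_over :: "'x set \<Rightarrow> ('x \<Rightarrow> ('ap, 'x set) iml) \<Rightarrow> ('ap, 'x set) iml" where
  "conj_over S f = Conj ((\<lambda>z. {z}) ` S) (\<lambda>s. f (the_elem s))"

definition disj_over :: "'x set \<Rightarrow> ('x \<Rightarrow> ('ap, 'x set) iml) \<Rightarrow> ('ap, 'x set) iml" where
  "disj_over S f = Neg (conj_over S (\<lambda>z. Neg (f z)))"

lemma iml_ext_conj_over:
  "iml_ext C V (conj_over S f) = {x. \<forall>z\<in>S. x \<in> iml_ext C V (f z)}"
  by (simp add: conj_over_def)

lemma iml_ext_disj_over:
  "iml_ext C V (disj_over S f) = (\<Union>z\<in>S. iml_ext C V (f z))"
  by (auto simp: disj_over_def iml_ext_conj_over)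

lemma iml_separating_formula:
  fixes C :: "'x set \<Rightarrow> 'x set" and V :: "'ap \<Rightarrow> 'x set"
  assumes "(y, z) \<notin> iml_equiv C V"
  shows "\<exists>\<phi> :: ('ap, 'x set) iml. y \<in> iml_ext C V \<phi> \<and> z \<notin> iml_ext C V \<phi>"
proof -
  from assms obtain \<phi> :: "('ap, 'x set) iml"
    where "y \<in> iml_ext C V \<phi> \<longleftrightarrow> z \<notin> iml_ext C V \<phi>"
    unfolding iml_equiv_iff by blast
  then show ?thesis
    by (cases "y \<in> iml_ext C V \<phi>") (auto intro: exI[of _ "Neg \<phi>"])
qed

lemma iml_equiv_class_definable:
  fixes C :: "'x set \<Rightarrow> 'x set" and V :: "'ap \<Rightarrow> 'x set"
  shows "\<exists>\<chi> :: ('ap, 'x set) iml. iml_ext C V \<chi> = iml_equiv C V `` {y}"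
proof -
  let ?E = "iml_equiv C V"
  obtain \<psi> :: "'x \<Rightarrow> ('ap, 'x set) iml"
    where \<psi>: "\<And>z. (y, z) \<notin> ?E \<Longrightarrow> y \<in> iml_ext C V (\<psi> z) \<and> z \<notin> iml_ext C V (\<psi> z)"
    using iml_separating_formula by metis
  have "iml_ext C V (conj_over (- ?E `` {y}) \<psi>) = ?E `` {y}"
  proof (intro set_eqI iffI)
    fix x assume "x \<in> iml_ext C V (conj_over (- ?E `` {y}) \<psi>)"
    then show "x \<in> ?E `` {y}"
      using \<psi> by (auto simp: iml_ext_conj_over)
  next
    fix x assume "x \<in> ?E `` {y}"
    then show "x \<in> iml_ext C V (conj_over (- ?E `` {y}) \<psi>)"
      using \<psi> by (auto simp: iml_ext_conj_over iml_equiv_iff)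
  qed
  then show ?thesis by blast
qed

lemma iml_saturated_definable:
  fixes C :: "'x set \<Rightarrow> 'x set" and V :: "'ap \<Rightarrow> 'x set"
  assumes saturated: "iml_equiv C V `` S \<subseteq> S"
  shows "\<exists>\<Phi> :: ('ap, 'x set) iml. iml_ext C V \<Phi> = S"
proof -
  let ?E = "iml_equiv C V"
  obtain \<chi> :: "'x \<Rightarrow> ('ap, 'x set) iml" where \<chi>: "\<And>y. iml_ext C V (\<chi> y) = ?E `` {y}"
    using iml_equiv_class_definable by metis
  have "S \<subseteq> ?E `` S"
    by (blast intro: iml_equiv_refl)
  with saturated have "iml_ext C V (disj_over S \<chi>) = S"
    by (simp add: iml_ext_disj_over \<chi> flip: Image_eq_UN)
  then show ?thesis by blast
qed

lemma iml_equiv_interior_transfer: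
  fixes C :: "'x set \<Rightarrow> 'x set" and V :: "'ap \<Rightarrow> 'x set"
  assumes "closure_space C" and "(x1, x2) \<in> iml_equiv C V" and "x1 \<in> interior_op C X1"
  shows "x2 \<in> interior_op C (iml_equiv C V `` X1)"
proof -
  let ?E = "iml_equiv C V"
  have "?E `` (- ?E `` X1) \<subseteq> - ?E `` X1"
    using equiv_Image_complement_saturated[OF equiv_iml_equiv] .
  then obtain \<Phi> :: "('ap, 'x set) iml" where \<Phi>: "iml_ext C V \<Phi> = - ?E `` X1"
    using iml_saturated_definable by metis
  have "X1 \<subseteq> ?E `` X1"
    by (blast intro: iml_equiv_refl)
  then have "x1 \<in> interior_op C (?E `` X1)"
    using interior_op_mono[OF assms(1)] assms(3) by (meson subsetD)
  then have "x1 \<in> iml_ext C V (Neg (Near \<Phi>))"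
    by (simp add: \<Phi> interior_op_def)
  then have "x2 \<in> iml_ext C V (Neg (Near \<Phi>))"
    using assms(2) unfolding iml_equiv_iff by blast
  then show ?thesis
    by (simp add: \<Phi> interior_op_def)
qed

lemma val_inv_eq_if_iml_equiv:
  assumes "(x1, x2) \<in> iml_equiv C V"
  shows "val_inv V x1 = val_inv V x2"
proof -
  have "x1 \<in> V p \<longleftrightarrow> x2 \<in> V p" for p
    using assms[unfolded iml_equiv_iff, rule_format, of "Atom p"] by simp
  then show ?thesis
    unfolding val_inv_def by blast
qed

theorem mainTheorem15:
  fixes C :: "'x set \<Rightarrow> 'x set" and V :: "'ap \<Rightarrow> 'x set"
  assumes "closure_space C"
  shows "closure_bisim C V (iml_equiv C V)"
proof -
  let ?E = "iml_equiv C V"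
  have "?E \<noteq> {}"
    using iml_equiv_refl by (metis empty_iff)
  moreover have "val_inv V x1 = val_inv V x2 \<and>
      (\<forall>X1. x1 \<in> interior_op C X1 \<longrightarrow>
         (\<exists>X2. x2 \<in> interior_op C X2 \<and> (\<forall>x2'\<in>X2. \<exists>x1'\<in>X1. (x1', x2') \<in> ?E)))"
    if "(x1, x2) \<in> ?E" for x1 x2
    using val_inv_eq_if_iml_equiv[OF that] iml_equiv_interior_transfer[OF assms that] by blast
  ultimately show ?thesis
    unfolding closure_bisim_def using equiv_iml_equiv[of C V] by blast
qed

end
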